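(* Let $\mathcal A^\Psi=\Psi\circ\mathcal A\circ\Psi^{-1}$. Then $\Psi$ maps $\mathcal T_0(\mathrm{OP})$ bijectively onto $I^{\mathcal D}\times I^{\mathbb N}_\infty$, and for all $f\in I^{\mathcal D}$ and $\alpha\in I^{\mathbb N}_\infty$, $$\mathcal A^\Psi(f,\alpha)=\bigl(f(\,\cdot\,+\tau^{-1}(\mathbb O[\alpha]-\alpha)),\ \mathbb O[\alpha]\bigr).$$
   Context: Let $I=\{0,1\}$. The graded graph $\mathrm{OP}$ has vertex sets $\mathrm{OP}_0=I$, $\mathrm{OP}_{n+1}=\mathrm{OP}_n\times\mathrm{OP}_n$; for $v=(v_0,v_1)\in\mathrm{OP}_{n+1}$ there is an edge of index $0$ from $v_0$ to $v$ and an edge of index $1$ from $v_1$ to $v$ (two distinct edges if $v_0=v_1$), and no other edges. $\mathcal T(\mathrm{OP})$ is the set of infinite paths $x=(v_0,e_0,v_1,e_1,\dots)$, $v_n\in\mathrm{OP}_n$, $e_n$ an edge from $v_n$ to $v_{n+1}$. A path is determined by its vertex on floor $N$ and the indices of its edges below floor $N$. The adic transformation $\mathcal A$ is defined on paths having at least one edge of index $0$: if $e_n$ is the first edge of $x$ with index $0$, then $\mathcal Ax$ coincides with $x$ from floor $n+1$ on, its edge from floor $n$ to $n+1$ has index $1$, and all its edges below floor $n$ have index $0$. $\mathcal T_0(\mathrm{OP})$ is the set of paths $x$ for which $\mathcal A^nx$ is defined for all $n\in\mathbb Z$. $\mathcal D=\bigoplus_{i\ge0}\mathbb Z/2\mathbb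 Z$ with generators $g_0,g_1,\dots$, $\mathcal D_n=\langle g_0,\dots,g_{n-1}\rangle$. $I^{\mathbb N}$ is the group of sequences $(\alpha_i)_{i\ge1}$ under coordinatewise addition mod 2; $\tau\colon\mathcal D\to I^{\mathbb N}$, $\tau(\sum_i\alpha_ig_{i-1})=(\alpha_i)_{i\ge1}$ (an injective homomorphism onto the finitely supported sequences). $I^{\mathbb N}_\infty$ is the set of sequences with infinitely many zeros and infinitely many ones. The odometer $\mathbb O$: if $\alpha_1=\dots=\alpha_{n-1}=1$ and $\alpha_n=0$, then $\mathbb O[\alpha]_i=0$ for $i<n$, $\mathbb O[\alpha]_n=1$, $\mathbb O[\alpha]_i=\alpha_i$ for $i>n$. $\Psi=(F,A)$: define $\Phi[v]\in I^{\mathcal D_n}$ for $v\in\mathrm{OP}_n$ by $\Phi[v](0)=v$ if $n=0$, and for $v=(v_0,v_1)\in\mathrm{OP}_{n+1}$, $\Phi[v](h)=\Phi[v_0](h)$ for $h\in\mathcal D_n$, $\Phi[v](h)=\Phi[v_1](g_n+h)$ for $h\in\mathcal D_{n+1}\setminus\mathcal D_n$. For a path $x$ with vertices $v_n$ and edges $e_n$, $A[x]=\alpha$ with $\alpha_n$ the index of $e_{n-1}$, and $F[x](g)=\Phi[v_n](g+\sum_{i=0}^{n-1}\alpha_{i+1}g_i)$ for $g\in\mathcal D_n$, $n\ge1$. $\Psi[x]=(F[x],A[x])$ is a homeomorphism $\mathcal T(\mathrm{OP})\to I^{\mathcal D}\times I^{\mathbb N}$. *)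

theory Defs
  imports Main "HOL-Library.FSet"
begin

text \<open>The index set I = {0,1} is rendered as bool (0 = False, 1 = True);
  addition in I (mod 2) is exclusive or.\<close>

datatype optree = Leaf bool | Node optree optree

fun OP :: "nat \<Rightarrow> optree set" where
  "OP 0 = range Leaf"
| "OP (Suc n) = {Node a b | a b. a \<in> OP n \<and> b \<in> OP n}"

text \<open>The edge of index i into v = (v_0,v_1) starts at v_i.\<close>
fun comp :: "bool \<Rightarrow> optree \<Rightarrow> optree" where
  "comp False (Node a b) = a"
| "comp True (Node a b) = b"
| "comp _ (Leaf c) = Leaf c"

text \<open>A path is given by its vertex sequence vs (vs n on floor n) and the
  indices es of its edges (es n = index of the edge e_n from floor n to n+1).\<close>
type_synonym path = "(nat \<Rightarrow> optree) \<times> (nat \<Rightarrow> bool)"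

definition paths :: "path set" where
  "paths = {(vs, es). \<forall>n. vs n \<in> OP n \<and> vs n = comp (es n) (vs (Suc n))}"

definition adic_dom :: "path set" where
  "adic_dom = {x \<in> paths. \<exists>n. \<not> snd x n}"

text \<open>descend es N w d: the vertex on floor N - d of the path which has vertex w
  on floor N and edge indices es below floor N.\<close>
fun descend :: "(nat \<Rightarrow> bool) \<Rightarrow> nat \<Rightarrow> optree \<Rightarrow> nat \<Rightarrow> optree" where
  "descend es N w 0 = w"
| "descend es N w (Suc d) = comp (es (N - Suc d)) (descend es N w d)"

definition adic :: "path \<Rightarrow> path" where
  "adic x = (let vs = fst x; es = snd x; n = (LEAST k. \<not> es k);
     es' = (\<lambda>k. if k < n then False else if k = n then True else es k)
   in ((\<lambda>k. if n < k then vs k else descend es' (Suc n) (vs (Suc n)) (Suc n - k)), es'))"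

text \<open>T_0(OP): paths x such that A^k x is defined for every integer k.  For k \<ge> 0
  this means x, A x, ..., A^(k-1) x all lie in the domain of A; for negative
  exponent -k it means there is a path y with y, ..., A^(k-1) y in the domain and
  A^k y = x.\<close>
definition T0 :: "path set" where
  "T0 = {x \<in> paths. (\<forall>k. (adic ^^ k) x \<in> adic_dom) \<and>
     (\<forall>k. \<exists>y \<in> paths. (\<forall>j<k. (adic ^^ j) y \<in> adic_dom) \<and> (adic ^^ k) y = x)}"

text \<open>D = direct sum of copies of Z/2 with generators g_0, g_1, ...: an element
  sum_i a_i g_i is represented by the finite set {i. a_i = 1}; addition is
  symmetric difference. D_n = finite sets contained in {..<n}.\<close>
definition dadd :: "nat fset \<Rightarrow> nat fset \<Rightarrow> nat fset" where
  "dadd A B = (A |-| B) |\<union>| (B |-| A)"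

definition gen :: "nat \<Rightarrow> nat fset" where
  "gen i = {|i|}"

text \<open>Sequences (alpha_i)_(i\<ge>1) in I^N are represented with a shift of index:
  a :: nat \<Rightarrow> bool with a k = alpha_(k+1).  Thus tau(sum alpha_i g_(i-1)) is
  the sequence k \<mapsto> [g_k occurs].\<close>
definition tau :: "nat fset \<Rightarrow> (nat \<Rightarrow> bool)" where
  "tau h = (\<lambda>k. k |\<in>| h)"

definition seq_sub :: "(nat \<Rightarrow> bool) \<Rightarrow> (nat \<Rightarrow> bool) \<Rightarrow> (nat \<Rightarrow> bool)" where
  "seq_sub a b = (\<lambda>k. a k \<noteq> b k)"

definition I_inf :: "(nat \<Rightarrow> bool) set" where
  "I_inf = {a. infinite {k. a k} \<and> infinite {k. \<not> a k}}"

definition odometer :: "(nat \<Rightarrow> bool) \<Rightarrow> (nat \<Rightarrow> bool)" where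
  "odometer a = (let n = (LEAST k. \<not> a k) in
     (\<lambda>k. if k < n then False else if k = n then True else a k))"

fun phi :: "nat \<Rightarrow> optree \<Rightarrow> nat fset \<Rightarrow> bool" where
  "phi 0 (Leaf b) h = b"
| "phi (Suc n) (Node v0 v1) h =
     (if (\<forall>i. i |\<in>| h \<longrightarrow> i < n) then phi n v0 h else phi n v1 (dadd (gen n) h))"
| "phi _ _ _ = False"

text \<open>F[x](g) = Phi[v_n](g + sum_(i<n) alpha_(i+1) g_i) for g in D_n, n \<ge> 1;
  we use the particular n = 1 + max g (resp. n = 1 if g = 0); the value does not
  depend on the admissible n.\<close>
definition Fmap :: "path \<Rightarrow> nat fset \<Rightarrow> bool" where
  "Fmap x g = (let n = Suc (Max (insert 0 (fset g))) in
     phi n (fst x n) (dadd g (Abs_fset {i. i < n \<and> snd x i})))"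

definition Amap :: "path \<Rightarrow> (nat \<Rightarrow> bool)" where
  "Amap x = snd x"

definition Psi :: "path \<Rightarrow> (nat fset \<Rightarrow> bool) \<times> (nat \<Rightarrow> bool)" where
  "Psi x = (Fmap x, Amap x)"

definition adicPsi :: "(nat fset \<Rightarrow> bool) \<times> (nat \<Rightarrow> bool) \<Rightarrow> (nat fset \<Rightarrow> bool) \<times> (nat \<Rightarrow> bool)" where
  "adicPsi = Psi \<circ> adic \<circ> inv_into paths Psi"

end

theory Submission
  imports Defs "HOL-Library.Infinite_Set"
begin

text \<open>\<open>\<Phi>\<close> identifies \<open>OP\<^sub>n\<close> with \<open>I\<^bsup>D\<^sub>n\<^esup>\<close>, and descending along the edge of index \<open>i\<close> from
  floor \<open>n+1\<close> corresponds to translating by \<open>i g\<^sub>n\<close> and restricting to \<open>D\<^sub>n\<close>.  Hence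
  \<open>\<Phi>[v\<^sub>n](g + \<Sum>\<^sub>i\<^sub><\<^sub>n \<alpha>\<^sub>i\<^sub>+\<^sub>1 g\<^sub>i)\<close> is the same on every floor \<open>n\<close> with \<open>g \<in> D\<^sub>n\<close>, and \<open>\<Psi>\<close> is a
  bijection from all paths onto \<open>I\<^bsup>D\<^esup> \<times> I\<^bsup>\<nat>\<^esup>\<close>.  The adic transformation acts on the edge
  indices as the odometer and keeps the vertices above the first edge of index 0, say the edge
  into floor \<open>n+1\<close>; so the translation changes by \<open>g\<^sub>0 + \<dots> + g\<^sub>n = \<tau>\<^sup>-\<^sup>1(O[\<alpha>] - \<alpha>)\<close>, which is
  the formula for \<open>A\<^sup>\<Psi>\<close>.  Finally, a path lies in \<open>T\<^sub>0\<close> iff its index sequence has infinitely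
  many 0s and 1s: if the indices are constant from \<open>N\<close> on, then the odometer increments the
  first \<open>N\<close> digits read as a binary number, so the orbit overflows after at most \<open>2\<^sup>N\<close> steps
  forward (resp. backward).\<close>

lemma dadd_mem: "k |\<in>| dadd A B \<longleftrightarrow> (k |\<in>| A) \<noteq> (k |\<in>| B)"
  unfolding dadd_def by auto

lemma dadd_assoc: "dadd (dadd A B) C = dadd A (dadd B C)"
  by (rule fset_eqI) (auto simp: dadd_mem)

lemma dadd_cancel_left: "dadd A (dadd A B) = B"
  by (rule fset_eqI) (auto simp: dadd_mem)

lemma dadd_cancel_right: "dadd (dadd B A) A = B"
  by (rule fset_eqI) (auto simp: dadd_mem)

lemma dadd_empty_right: "dadd A {||} = A"
  by (rule fset_eqI) (auto simp: dadd_mem)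

definition in_D :: "nat \<Rightarrow> nat fset \<Rightarrow> bool" where
  "in_D n h \<longleftrightarrow> (\<forall>i. i |\<in>| h \<longrightarrow> i < n)"

definition prefix_D :: "(nat \<Rightarrow> bool) \<Rightarrow> nat \<Rightarrow> nat fset" where
  "prefix_D a n = Abs_fset {i. i < n \<and> a i}"

lemma prefix_D_mem: "k |\<in>| prefix_D a n \<longleftrightarrow> k < n \<and> a k"
  unfolding prefix_D_def by (simp add: Abs_fset_inverse)

lemma prefix_D_Suc: "prefix_D a (Suc n) = dadd (prefix_D a n) (if a n then gen n else {||})"
  by (rule fset_eqI) (auto simp: dadd_mem prefix_D_mem gen_def less_Suc_eq)

lemma in_D_dadd_prefix_D: "in_D n g \<Longrightarrow> in_D n (dadd g (prefix_D a n))"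
  by (auto simp: in_D_def dadd_mem prefix_D_mem)

lemma in_D_Max: "in_D (Suc (Max (insert 0 (fset g)))) g"
  unfolding in_D_def by (auto simp: less_Suc_eq_le intro!: Max_ge)

lemma in_D_mono: "in_D n h \<Longrightarrow> n \<le> N \<Longrightarrow> in_D N h"
  unfolding in_D_def by fastforce

lemma in_D_Suc_cases: "in_D (Suc n) h \<Longrightarrow> \<not> in_D n h \<Longrightarrow> in_D n (dadd (gen n) h)"
  unfolding in_D_def by (auto simp: dadd_mem gen_def less_Suc_eq)

lemma in_D_dadd_gen: "in_D n h \<Longrightarrow> \<not> in_D n (dadd (gen n) h) \<and> in_D (Suc n) (dadd (gen n) h)"
  unfolding in_D_def by (auto simp: dadd_mem gen_def)

lemma phi_Node:
  "phi (Suc n) (Node a b) h = (if in_D n h then phi n a h else phi n b (dadd (gen n) h))"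
  by (simp add: in_D_def)

lemma phi_comp:
  assumes "v \<in> OP (Suc n)" "in_D n h"
  shows "phi (Suc n) v (dadd h (if b then gen n else {||})) = phi n (comp b v) h"
proof -
  obtain v0 v1 where v: "v = Node v0 v1" using assms(1) by auto
  show ?thesis
  proof (cases b)
    case True
    have "\<not> in_D n (dadd h (gen n))"
      using assms(2) by (auto simp: in_D_def dadd_mem gen_def)
    moreover have "dadd (gen n) (dadd h (gen n)) = h"
      by (rule fset_eqI) (auto simp: dadd_mem)
    ultimately show ?thesis using True by (simp add: v phi_Node del: phi.simps)
  next
    case False
    then show ?thesis using assms(2) by (simp add: v phi_Node dadd_empty_right del: phi.simps)
  qed
qed

text \<open>Oriented with \<open>comp\<close> on the left: the defining equation of \<open>paths\<close> makes the simplifier loop.\<close>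

lemma paths_iff:
  "x \<in> paths \<longleftrightarrow> (\<forall>n. fst x n \<in> OP n \<and> comp (snd x n) (fst x (Suc n)) = fst x n)"
  by (cases x) (simp only: paths_def mem_Collect_eq prod.case fst_conv snd_conv, metis)

lemma paths_OP: "x \<in> paths \<Longrightarrow> fst x n \<in> OP n"
  unfolding paths_iff by blast

lemma paths_comp: "x \<in> paths \<Longrightarrow> comp (snd x n) (fst x (Suc n)) = fst x n"
  unfolding paths_iff by blast

lemma phi_prefix_D_floor_indep:
  assumes x: "x \<in> paths" and g: "in_D n g" and "n \<le> N"
  shows "phi N (fst x N) (dadd g (prefix_D (snd x) N)) = phi n (fst x n) (dadd g (prefix_D (snd x) n))"
  using \<open>n \<le> N\<close>
proof (induction N rule: dec_induct)
  case (step m)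
  have "in_D m (dadd g (prefix_D (snd x) m))"
    using g step(1) by (auto simp: in_D_def dadd_mem prefix_D_mem)
  then have "phi (Suc m) (fst x (Suc m)) (dadd g (prefix_D (snd x) (Suc m)))
      = phi m (comp (snd x m) (fst x (Suc m))) (dadd g (prefix_D (snd x) m))"
    unfolding prefix_D_Suc dadd_assoc[symmetric] by (rule phi_comp[OF paths_OP[OF x]])
  then show ?case using step(3) by (simp only: paths_comp[OF x])
qed simp

lemma Fmap_eq_phi:
  assumes x: "x \<in> paths" and g: "in_D N g" and "0 < N"
  shows "Fmap x g = phi N (fst x N) (dadd g (prefix_D (snd x) N))"
proof -
  define m where "m = Suc (Max (insert 0 (fset g)))"
  have "Max (insert 0 (fset g)) < N"
    using g \<open>0 < N\<close> by (auto simp: in_D_def)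
  then have "m \<le> N" unfolding m_def by (rule Suc_leI)
  have "Fmap x g = phi m (fst x m) (dadd g (prefix_D (snd x) m))"
    unfolding Fmap_def prefix_D_def m_def by (simp add: Let_def)
  also have "\<dots> = phi N (fst x N) (dadd g (prefix_D (snd x) N))"
    by (rule phi_prefix_D_floor_indep[OF x _ \<open>m \<le> N\<close>, symmetric]) (simp add: m_def in_D_Max)
  finally show ?thesis .
qed

lemma phi_eq_Fmap:
  assumes x: "x \<in> paths" and h: "in_D N h" and "0 < N"
  shows "phi N (fst x N) h = Fmap x (dadd h (prefix_D (snd x) N))"
  using Fmap_eq_phi[OF x in_D_dadd_prefix_D[OF h] \<open>0 < N\<close>] by (simp add: dadd_cancel_right)

fun vertex_of :: "nat \<Rightarrow> (nat fset \<Rightarrow> bool) \<Rightarrow> optree" where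
  "vertex_of 0 p = Leaf (p {||})"
| "vertex_of (Suc n) p = Node (vertex_of n p) (vertex_of n (\<lambda>h. p (dadd (gen n) h)))"

lemma vertex_of_OP: "vertex_of n p \<in> OP n"
  by (induction n arbitrary: p) auto

lemma phi_vertex_of: "in_D n h \<Longrightarrow> phi n (vertex_of n p) h = p h"
proof (induction n arbitrary: p h)
  case 0
  then have "h = {||}" by (auto simp: in_D_def)
  then show ?case by simp
next
  case (Suc n)
  then show ?case
    using in_D_Suc_cases[OF Suc.prems] by (simp add: phi_Node dadd_cancel_left del: phi.simps)
qed

lemma phi_inject:
  assumes "v \<in> OP n" "w \<in> OP n" "\<And>h. in_D n h \<Longrightarrow> phi n v h = phi n w h"
  shows "v = w"
  using assms
proof (induction n arbitrary: v w)
  case 0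
  moreover have "in_D 0 {||}" by (simp add: in_D_def)
  ultimately show ?case by fastforce
next
  case (Suc n)
  then obtain v0 v1 w0 w1 where v: "v = Node v0 v1" and w: "w = Node w0 w1"
    and OP: "v0 \<in> OP n" "v1 \<in> OP n" "w0 \<in> OP n" "w1 \<in> OP n" by auto
  have "v0 = w0"
  proof (rule Suc.IH[OF OP(1,3)])
    fix h assume "in_D n h"
    then show "phi n v0 h = phi n w0 h"
      using Suc.prems(3)[of h] in_D_mono[of n h "Suc n"] by (simp add: v w phi_Node del: phi.simps)
  qed
  moreover have "v1 = w1"
  proof (rule Suc.IH[OF OP(2,4)])
    fix h assume "in_D n h"
    then show "phi n v1 h = phi n w1 h"
      using Suc.prems(3)[of "dadd (gen n) h"] in_D_dadd_gen
      by (simp add: v w phi_Node dadd_cancel_left del: phi.simps)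
  qed
  ultimately show ?case by (simp add: v w)
qed

lemma inj_on_Psi_paths: "inj_on Psi paths"
proof (rule inj_onI)
  fix x y assume x: "x \<in> paths" and y: "y \<in> paths" and "Psi x = Psi y"
  then have F: "Fmap x = Fmap y" and A: "snd x = snd y"
    by (simp_all add: Psi_def Amap_def)
  have pos: "fst x N = fst y N" if "0 < N" for N
    by (rule phi_inject[OF paths_OP[OF x] paths_OP[OF y]])
      (simp add: phi_eq_Fmap[OF x _ that] phi_eq_Fmap[OF y _ that] F A)
  have "fst x N = fst y N" for N
    using pos paths_comp[OF x, of 0] paths_comp[OF y, of 0] A by (cases N) auto
  then show "x = y" using A by (simp add: prod_eq_iff fun_eq_iff)
qed

lemma image_Psi_paths: "Psi ` paths = UNIV"
proof -
  have "(f, a) \<in> Psi ` paths" for f a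
  proof -
    define vs where "vs n = vertex_of n (\<lambda>h. f (dadd h (prefix_D a n)))" for n
    have x: "(vs, a) \<in> paths"
      unfolding paths_iff
    proof (intro allI conjI)
      fix n
      show "fst (vs, a) n \<in> OP n" by (simp add: vs_def vertex_of_OP)
      have "dadd (dadd (gen n) h) (dadd P (gen n)) = dadd h P" for h P
        by (rule fset_eqI) (auto simp: dadd_mem)
      then show "comp (snd (vs, a) n) (fst (vs, a) (Suc n)) = fst (vs, a) n"
        by (cases "a n") (simp_all add: vs_def prefix_D_Suc dadd_empty_right)
    qed
    have "Fmap (vs, a) g = f g" for g
    proof -
      define N where "N = Suc (Max (insert 0 (fset g)))"
      have g: "in_D N g" unfolding N_def by (rule in_D_Max)
      have "Fmap (vs, a) g = phi N (vs N) (dadd g (prefix_D a N))"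
        using Fmap_eq_phi[OF x g] by (simp add: N_def)
      also have "\<dots> = f g"
        unfolding vs_def by (simp add: phi_vertex_of[OF in_D_dadd_prefix_D[OF g]] dadd_cancel_right)
      finally show ?thesis .
    qed
    then have "Psi (vs, a) = (f, a)" by (simp add: Psi_def Amap_def fun_eq_iff)
    then show ?thesis using x by (metis image_eqI)
  qed
  then show ?thesis by auto
qed

text \<open>Both the adic transformation and its inverse change a path only below some floor m+1.\<close>

definition reroute :: "nat \<Rightarrow> (nat \<Rightarrow> bool) \<Rightarrow> path \<Rightarrow> path" where
  "reroute m es x =
     ((\<lambda>k. if m < k then fst x k else descend es (Suc m) (fst x (Suc m)) (Suc m - k)), es)"

lemma adic_eq_reroute: "adic x = reroute (LEAST k. \<not> snd x k) (odometer (snd x)) x"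
  unfolding adic_def reroute_def odometer_def Let_def ..

lemma reroute_reroute: "reroute m es (reroute m es' x) = reroute m es x"
  by (simp add: reroute_def fun_eq_iff)

lemma descend_OP: "w \<in> OP N \<Longrightarrow> d \<le> N \<Longrightarrow> descend es N w d \<in> OP (N - d)"
proof (induction d)
  case (Suc d)
  then have "descend es N w d \<in> OP (Suc (N - Suc d))"
    by (simp add: Suc_diff_Suc)
  then show ?case by (cases "es (N - Suc d)") auto
qed simp

lemma descend_path: "x \<in> paths \<Longrightarrow> d \<le> N \<Longrightarrow> descend (snd x) N (fst x N) d = fst x (N - d)"
proof (induction d)
  case (Suc d)
  then have "N - d = Suc (N - Suc d)" by simp
  then show ?case using Suc by (simp add: paths_comp)
qed simp

lemma reroute_self: "x \<in> paths \<Longrightarrow> reroute m (snd x) x = x"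
  by (simp add: reroute_def descend_path prod_eq_iff fun_eq_iff)

lemma reroute_paths:
  assumes x: "x \<in> paths" and agree: "\<And>k. m < k \<Longrightarrow> es k = snd x k"
  shows "reroute m es x \<in> paths"
  unfolding paths_iff
proof (intro allI conjI)
  fix n
  show "fst (reroute m es x) n \<in> OP n"
    using descend_OP[OF paths_OP[OF x], where N = "Suc m" and d = "Suc m - n" and es = es] paths_OP[OF x]
    by (auto simp: reroute_def)
  show "comp (snd (reroute m es x) n) (fst (reroute m es x) (Suc n)) = fst (reroute m es x) n"
  proof (cases "m < n")
    case True
    then show ?thesis using paths_comp[OF x] agree by (simp add: reroute_def)
  next
    case False
    then have "Suc m - n = Suc (Suc m - Suc n)" by simp
    then show ?thesis using False by (cases "n = m") (simp_all add: reroute_def)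
  qed
qed

lemma adic_paths: "x \<in> paths \<Longrightarrow> adic x \<in> paths"
  unfolding adic_eq_reroute by (rule reroute_paths) (simp_all add: odometer_def Let_def)

lemma snd_adic: "snd (adic x) = odometer (snd x)"
  by (simp add: adic_eq_reroute reroute_def)

definition gens_upto :: "nat \<Rightarrow> nat fset" where
  "gens_upto n = Abs_fset {..n}"

lemma gens_upto_mem: "k |\<in>| gens_upto n \<longleftrightarrow> k \<le> n"
  unfolding gens_upto_def by (simp add: Abs_fset_inverse)

lemma odometer_neq_iff:
  assumes "\<exists>k. \<not> a k"
  shows "odometer a k \<noteq> a k \<longleftrightarrow> k \<le> (LEAST k. \<not> a k)"
proof -
  have "\<not> a (LEAST k. \<not> a k)" by (rule LeastI_ex[OF assms])
  moreover have "a k" if "k < (LEAST k. \<not> a k)" using not_less_Least[OF that] by simp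
  ultimately show ?thesis
    by (cases "k < (LEAST k. \<not> a k)"; cases "k = (LEAST k. \<not> a k)")
      (simp_all add: odometer_def Let_def)
qed

lemma odometer_above_least: "(LEAST k. \<not> a k) < k \<Longrightarrow> odometer a k = a k"
  by (simp add: odometer_def Let_def)

lemma inv_tau_odometer_diff:
  assumes "\<exists>k. \<not> a k"
  shows "inv tau (seq_sub (odometer a) a) = gens_upto (LEAST k. \<not> a k)"
proof -
  have "inj tau" by (rule injI, rule fset_eqI) (metis tau_def)
  moreover have "seq_sub (odometer a) a = tau (gens_upto (LEAST k. \<not> a k))"
    unfolding seq_sub_def tau_def gens_upto_mem using odometer_neq_iff[OF assms] by blast
  ultimately show ?thesis by (simp only: inv_f_f)
qed

lemma prefix_D_odometer:
  assumes "\<exists>k. \<not> a k" "(LEAST k. \<not> a k) < N"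
  shows "prefix_D (odometer a) N = dadd (gens_upto (LEAST k. \<not> a k)) (prefix_D a N)"
proof (rule fset_eqI)
  fix k
  show "k |\<in>| prefix_D (odometer a) N \<longleftrightarrow> k |\<in>| dadd (gens_upto (LEAST k. \<not> a k)) (prefix_D a N)"
    unfolding dadd_mem prefix_D_mem gens_upto_mem
    using odometer_neq_iff[OF assms(1), of k] assms(2) by (metis le_less_trans)
qed

lemma Fmap_adic:
  assumes x: "x \<in> paths" and "\<exists>k. \<not> snd x k"
  shows "Fmap (adic x) g = Fmap x (dadd g (gens_upto (LEAST k. \<not> snd x k)))"
proof -
  define n where "n = (LEAST k. \<not> snd x k)"
  define N where "N = max (Suc n) (Suc (Max (insert 0 (fset g))))"
  have "n < N" "0 < N" by (simp_all add: N_def)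
  have g: "in_D N g" by (rule in_D_mono[OF in_D_Max]) (simp add: N_def)
  have gn: "in_D N (dadd g (gens_upto n))"
    using g \<open>n < N\<close> unfolding in_D_def dadd_mem gens_upto_mem by fastforce
  have vertex: "fst (adic x) N = fst x N"
    using \<open>n < N\<close> by (simp add: adic_eq_reroute reroute_def n_def)
  have shift: "prefix_D (snd (adic x)) N = dadd (gens_upto n) (prefix_D (snd x) N)"
    unfolding snd_adic n_def by (rule prefix_D_odometer[OF assms(2) \<open>n < N\<close>[unfolded n_def]])
  have "Fmap (adic x) g = phi N (fst (adic x) N) (dadd g (prefix_D (snd (adic x)) N))"
    by (rule Fmap_eq_phi[OF adic_paths[OF x] g \<open>0 < N\<close>])
  also have "\<dots> = phi N (fst x N) (dadd (dadd g (gens_upto n)) (prefix_D (snd x) N))"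
    unfolding vertex shift dadd_assoc ..
  also have "\<dots> = Fmap x (dadd g (gens_upto n))"
    by (rule Fmap_eq_phi[OF x gn \<open>0 < N\<close>, symmetric])
  finally show ?thesis unfolding n_def .
qed

definition bin_val :: "nat \<Rightarrow> (nat \<Rightarrow> bool) \<Rightarrow> nat" where
  "bin_val N a = (\<Sum>i<N. if a i then 2 ^ i else 0)"

lemma bin_val_Suc: "bin_val (Suc N) a = bin_val N a + (if a N then 2 ^ N else 0)"
  by (simp add: bin_val_def)

lemma bin_val_less: "bin_val N a < 2 ^ N"
  by (induction N) (auto simp: bin_val_def)

lemma bin_val_odometer:
  assumes "\<exists>k<N. \<not> a k"
  shows "bin_val N (odometer a) = Suc (bin_val N a)"
proof -
  define n where "n = (LEAST k. \<not> a k)"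
  have ex: "\<exists>k. \<not> a k" using assms by blast
  have "n < N" using assms Least_le[of "\<lambda>k. \<not> a k"] unfolding n_def by (meson le_less_trans)
  have zero: "\<not> a n" unfolding n_def by (rule LeastI_ex[OF ex])
  have ones: "a k" if "k < n" for k using not_less_Least[OF that[unfolded n_def]] by simp
  have odo: "odometer a k = (if k < n then False else if k = n then True else a k)" for k
    by (simp add: odometer_def Let_def n_def)
  have "bin_val n (odometer a) = 0" by (simp add: bin_val_def odo)
  moreover have "bin_val n a = (\<Sum>i<n. 2 ^ i)"
    unfolding bin_val_def by (rule sum.cong) (simp_all add: ones)
  ultimately have base: "bin_val (Suc n) (odometer a) = Suc (bin_val (Suc n) a)"
    using sum_power2[of n] zero by (simp add: bin_val_Suc odo atLeast0LessThan)
  from \<open>n < N\<close> have "Suc n \<le> N" by simp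
  then show ?thesis
  proof (induction N rule: dec_induct)
    case (step m)
    then show ?case using odometer_above_least[of a m] by (simp add: bin_val_Suc n_def)
  qed (rule base)
qed

lemma odometer_orbit_length_bound:
  assumes "\<forall>j<K. \<exists>k<N. \<not> (odometer ^^ j) a k"
  shows "K < 2 ^ N"
proof -
  have "bin_val N ((odometer ^^ j) a) = bin_val N a + j" if "j \<le> K" for j
    using that by (induction j) (simp_all add: assms bin_val_odometer)
  from this[of K] show ?thesis using bin_val_less[of N "(odometer ^^ K) a"] by simp
qed

lemma infinite_false_if_forward_orbit:
  assumes "\<forall>j. \<exists>k. \<not> (odometer ^^ j) a k"
  shows "infinite {k. \<not> a k}"
proof
  assume "finite {k. \<not> a k}"
  then have "MOST k. a k" by (simp add: MOST_iff_cofinite)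
  then obtain N where N: "\<forall>k\<ge>N. a k" by (auto simp: MOST_nat_le)
  have tail: "\<forall>k\<ge>N. (odometer ^^ j) a k" for j
  proof (induction j)
    case (Suc j)
    obtain z where "\<not> (odometer ^^ j) a z" using assms by blast
    then have "(LEAST k. \<not> (odometer ^^ j) a k) < N"
      using Suc.IH Least_le[of "\<lambda>k. \<not> (odometer ^^ j) a k" z] by (meson le_less_trans not_le)
    then show ?case
      using Suc.IH odometer_above_least[of "(odometer ^^ j) a"] by simp
  qed (simp add: N)
  have "\<exists>k<N. \<not> (odometer ^^ j) a k" for j
    using tail[of j] assms by (meson not_le)
  then have "2 ^ N < (2::nat) ^ N" by (intro odometer_orbit_length_bound[where a = a]) simp
  then show False by simp
qed

lemma odometer_keeps_later_true:
  assumes "\<exists>k. \<not> a k" "a i"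
  shows "\<exists>i'\<ge>i. odometer a i'"
proof (cases "(LEAST k. \<not> a k) < i")
  case True
  then show ?thesis using assms(2) odometer_above_least[OF True] by blast
next
  case False
  then show ?thesis by (intro exI[of _ "LEAST k. \<not> a k"]) (simp add: odometer_def Let_def)
qed

lemma infinite_true_if_backward_orbits:
  assumes "\<forall>K. \<exists>b. (\<forall>j<K. \<exists>k. \<not> (odometer ^^ j) b k) \<and> (odometer ^^ K) b = a"
  shows "infinite {k. a k}"
proof
  assume "finite {k. a k}"
  then have "MOST k. \<not> a k" by (simp add: MOST_iff_cofinite)
  then obtain N where N: "\<forall>k\<ge>N. \<not> a k" by (auto simp: MOST_nat_le)
  define K :: nat where "K = 2 ^ N"
  obtain b where zero: "\<forall>j<K. \<exists>k. \<not> (odometer ^^ j) b k" and final: "(odometer ^^ K) b = a"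
    using assms by blast
  have keep: "\<exists>i\<ge>N. (odometer ^^ (j + d)) b i" if "\<exists>i\<ge>N. (odometer ^^ j) b i" "j + d \<le> K" for j d
    using that
  proof (induction d)
    case (Suc d)
    then obtain i where "i \<ge> N" "(odometer ^^ (j + d)) b i" by auto
    with zero Suc.prems(2) show ?case
      using odometer_keeps_later_true[of "(odometer ^^ (j + d)) b" i] by (auto intro: order.trans)
  qed simp
  have "\<exists>k<N. \<not> (odometer ^^ j) b k" if "j < K" for j
  proof (rule ccontr)
    define n where "n = (LEAST k. \<not> (odometer ^^ j) b k)"
    assume "\<not> (\<exists>k<N. \<not> (odometer ^^ j) b k)"
    then have "N \<le> n" using LeastI_ex[of "\<lambda>k. \<not> (odometer ^^ j) b k"] zero that
      unfolding n_def by (meson not_le)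
    moreover have "(odometer ^^ Suc j) b n" by (simp add: odometer_def Let_def n_def)
    ultimately have "\<exists>i\<ge>N. (odometer ^^ (Suc j + (K - Suc j))) b i"
      using keep[of "Suc j" "K - Suc j"] that by auto
    then show False using N final that by auto
  qed
  then have "K < 2 ^ N" by (intro odometer_orbit_length_bound[where a = b]) simp
  then show False by (simp add: K_def)
qed

lemma I_inf_iff: "a \<in> I_inf \<longleftrightarrow> (INFM k. a k) \<and> (INFM k. \<not> a k)"
  by (simp add: I_inf_def INFM_iff_infinite)

lemma I_inf_eventually_eq:
  assumes "a \<in> I_inf" "\<And>k. m < k \<Longrightarrow> b k = a k"
  shows "b \<in> I_inf"
proof -
  have "MOST k. b k = a k" using assms(2) by (auto simp: MOST_nat)
  then have "MOST k. (a k \<longrightarrow> b k) \<and> (\<not> a k \<longrightarrow> \<not> b k)" by (rule eventually_mono) simp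
  then show ?thesis using assms(1) unfolding I_inf_iff
    by (auto elim: frequently_rev_mp eventually_mono)
qed

lemma I_inf_ex_false: "a \<in> I_inf \<Longrightarrow> \<exists>k. \<not> a k"
  by (auto simp: I_inf_def dest: infinite_imp_nonempty)

lemma I_inf_ex_true: "a \<in> I_inf \<Longrightarrow> \<exists>k. a k"
  by (auto simp: I_inf_def dest: infinite_imp_nonempty)

lemma odometer_I_inf: "a \<in> I_inf \<Longrightarrow> odometer a \<in> I_inf"
  by (rule I_inf_eventually_eq[where m = "LEAST k. \<not> a k"]) (simp_all add: odometer_above_least)

lemma snd_adic_funpow: "snd ((adic ^^ k) x) = (odometer ^^ k) (snd x)"
  by (induction k) (simp_all add: snd_adic)

lemma adic_funpow_paths: "x \<in> paths \<Longrightarrow> (adic ^^ k) x \<in> paths"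
  by (induction k) (simp_all add: adic_paths)

definition odometer_pred :: "(nat \<Rightarrow> bool) \<Rightarrow> nat \<Rightarrow> bool" where
  "odometer_pred a = (let m = (LEAST k. a k) in
     (\<lambda>k. if k < m then True else if k = m then False else a k))"

lemma
  assumes "\<exists>k. a k"
  shows Least_odometer_pred: "(LEAST k. \<not> odometer_pred a k) = (LEAST k. a k)"
    and odometer_odometer_pred: "odometer (odometer_pred a) = a"
proof -
  define m where "m = (LEAST k. a k)"
  have pred: "odometer_pred a k = (if k < m then True else if k = m then False else a k)" for k
    by (simp add: odometer_pred_def Let_def m_def)
  show L: "(LEAST k. \<not> odometer_pred a k) = (LEAST k. a k)"
    unfolding m_def[symmetric] by (rule Least_equality) (simp_all add: pred split: if_splits)
  have "a m" unfolding m_def by (rule LeastI_ex[OF assms])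
  moreover have "\<not> a k" if "k < m" for k using not_less_Least[OF that[unfolded m_def]] .
  moreover have "odometer (odometer_pred a) k
      = (if k < m then False else if k = m then True else odometer_pred a k)" for k
    using L by (simp add: odometer_def Let_def m_def)
  ultimately show "odometer (odometer_pred a) = a"
    by (auto simp: fun_eq_iff pred)
qed

lemma adic_reroute_odometer_pred:
  assumes "x \<in> paths" "\<exists>k. snd x k"
  shows "adic (reroute (LEAST k. snd x k) (odometer_pred (snd x)) x) = x"
proof -
  define y where "y = reroute (LEAST k. snd x k) (odometer_pred (snd x)) x"
  have "snd y = odometer_pred (snd x)" by (simp add: y_def reroute_def)
  then have "adic y = reroute (LEAST k. snd x k) (snd x) y"
    by (simp add: adic_eq_reroute Least_odometer_pred odometer_odometer_pred assms(2))
  also have "\<dots> = x" by (simp add: y_def reroute_reroute reroute_self assms(1))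
  finally show ?thesis unfolding y_def .
qed

lemma adic_backward_orbit:
  assumes "x \<in> paths" "snd x \<in> I_inf"
  shows "\<exists>y\<in>paths. (\<forall>j<K. (adic ^^ j) y \<in> adic_dom) \<and> (adic ^^ K) y = x"
  using assms
proof (induction K arbitrary: x)
  case (Suc K)
  define m where "m = (LEAST k. snd x k)"
  define x' where "x' = reroute m (odometer_pred (snd x)) x"
  have ex: "\<exists>k. snd x k" using I_inf_ex_true[OF Suc.prems(2)] .
  have above: "odometer_pred (snd x) k = snd x k" if "m < k" for k
    using that by (simp add: odometer_pred_def Let_def m_def)
  have x': "x' \<in> paths"
    unfolding x'_def by (rule reroute_paths[OF Suc.prems(1) above])
  moreover have "snd x' \<in> I_inf"
    unfolding x'_def reroute_def snd_conv by (rule I_inf_eventually_eq[OF Suc.prems(2) above])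
  ultimately obtain y where y: "y \<in> paths" "\<forall>j<K. (adic ^^ j) y \<in> adic_dom" "(adic ^^ K) y = x'"
    using Suc.IH by blast
  have "\<not> snd x' m" by (simp add: x'_def reroute_def odometer_pred_def Let_def m_def)
  then have "x' \<in> adic_dom" using x' by (auto simp: adic_dom_def)
  moreover have "adic x' = x"
    unfolding x'_def m_def by (rule adic_reroute_odometer_pred[OF Suc.prems(1) ex])
  ultimately show ?case using y by (auto simp: less_Suc_eq)
qed auto

lemma T0_eq: "T0 = {x \<in> paths. snd x \<in> I_inf}"
proof (intro set_eqI iffI)
  fix x assume "x \<in> T0"
  then have x: "x \<in> paths" and forward: "\<forall>j. (adic ^^ j) x \<in> adic_dom"
    and backward: "\<forall>K. \<exists>y\<in>paths. (\<forall>j<K. (adic ^^ j) y \<in> adic_dom) \<and> (adic ^^ K) y = x"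
    unfolding T0_def by blast+
  have "\<forall>j. \<exists>k. \<not> (odometer ^^ j) (snd x) k"
    using forward by (simp add: adic_dom_def snd_adic_funpow)
  moreover have "\<exists>b. (\<forall>j<K. \<exists>k. \<not> (odometer ^^ j) b k) \<and> (odometer ^^ K) b = snd x" for K
  proof -
    obtain y where "\<forall>j<K. (adic ^^ j) y \<in> adic_dom" "(adic ^^ K) y = x" using backward by blast
    then show ?thesis by (intro exI[of _ "snd y"]) (auto simp: adic_dom_def simp flip: snd_adic_funpow)
  qed
  ultimately show "x \<in> {x \<in> paths. snd x \<in> I_inf}"
    using x infinite_false_if_forward_orbit infinite_true_if_backward_orbits
    by (simp add: I_inf_def)
next
  fix x assume "x \<in> {x \<in> paths. snd x \<in> I_inf}"
  then have x: "x \<in> paths" and a: "snd x \<in> I_inf" by auto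
  have "(odometer ^^ j) (snd x) \<in> I_inf" for j
    by (induction j) (simp_all add: a odometer_I_inf)
  then have "(adic ^^ j) x \<in> adic_dom" for j
    using adic_funpow_paths[OF x] I_inf_ex_false by (simp add: adic_dom_def snd_adic_funpow)
  then show "x \<in> T0" unfolding T0_def using x adic_backward_orbit[OF x a] by blast
qed

lemma image_Psi_T0: "Psi ` T0 = UNIV \<times> I_inf"
proof -
  have snd_Psi: "snd (Psi x) = snd x" for x by (simp add: Psi_def Amap_def)
  have "Psi ` T0 \<subseteq> UNIV \<times> I_inf" by (auto simp: T0_eq Psi_def Amap_def)
  moreover have "p \<in> Psi ` T0" if p: "p \<in> UNIV \<times> I_inf" for p
  proof -
    obtain x where x: "x \<in> paths" "p = Psi x" using image_Psi_paths by (metis UNIV_I imageE)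
    then have "x \<in> T0" using p by (simp add: T0_eq snd_Psi[symmetric] mem_Times_iff)
    then show ?thesis using x(2) by blast
  qed
  ultimately show ?thesis by blast
qed

theorem proposition1:
  shows "bij_betw Psi T0 (UNIV \<times> I_inf) \<and>
    (\<forall>f \<alpha>. \<alpha> \<in> I_inf \<longrightarrow>
       adicPsi (f, \<alpha>) = ((\<lambda>g. f (dadd g (inv tau (seq_sub (odometer \<alpha>) \<alpha>)))), odometer \<alpha>))"
proof (intro conjI allI impI)
  have "bij_betw Psi paths UNIV" by (simp add: bij_betw_def inj_on_Psi_paths image_Psi_paths)
  then show "bij_betw Psi T0 (UNIV \<times> I_inf)"
    by (rule bij_betw_subset[OF _ _ image_Psi_T0]) (auto simp: T0_eq)
next
  fix f \<alpha> assume "\<alpha> \<in> I_inf"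
  define x where "x = inv_into paths Psi (f, \<alpha>)"
  have x: "x \<in> paths" "Psi x = (f, \<alpha>)"
    unfolding x_def using image_Psi_paths by (simp_all add: inv_into_into f_inv_into_f)
  then have F: "Fmap x = f" and A: "snd x = \<alpha>" by (simp_all add: Psi_def Amap_def)
  have ex: "\<exists>k. \<not> \<alpha> k" by (rule I_inf_ex_false[OF \<open>\<alpha> \<in> I_inf\<close>])
  have "adicPsi (f, \<alpha>) = (Fmap (adic x), odometer \<alpha>)"
    by (simp add: adicPsi_def x_def[symmetric] Psi_def Amap_def snd_adic A)
  also have "Fmap (adic x) = (\<lambda>g. f (dadd g (inv tau (seq_sub (odometer \<alpha>) \<alpha>))))"
    using Fmap_adic[OF x(1)] ex by (simp add: fun_eq_iff F A inv_tau_odometer_diff)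
  finally show "adicPsi (f, \<alpha>) = ((\<lambda>g. f (dadd g (inv tau (seq_sub (odometer \<alpha>) \<alpha>)))), odometer \<alpha>)" .
qed
end
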